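(* Let $f : X \to \mathbb{R}$ and suppose there is a closed set $C \subseteq X$ such that $\inf_{x \in C} \mathrm{osc}_f(C,x) > 0$. Then Player I has a winning strategy in $\Gamma'(f)$.
   Context: Let $A$ be a non-empty countable set and $T$ a pruned tree on $A$ (a set of finite sequences of elements of $A$, closed under initial segments, in which every sequence has a proper extension in $T$). Let $X$ be the set of infinite branches of $T$, with the topology generated by the cylinder sets $O(s) = \{x \in X : s \text{ is an initial segment of } x\}$, $s \in T$. For closed $C \subseteq X$ and $x \in C$, $\mathrm{osc}_f(C,x) = \inf_{s \in T,\, x \in O(s)} \sup_{y,z \in O(s) \cap C} |f(y) - f(z)|$. The game $\Gamma'(f)$: Player I and Player II alternate, Player I moving first; Player I plays $x_0, x_1, \dots \in A$ subject to $(x_0,\dots,x_t) \in T$ for all $t$, and after each move $x_t$ Player II plays a pair of reals $(v_t,w_t)$; Player II wins iff $f(x_0,x_1,\dots) = \limsup_t v_t = \liminf_t w_t$; otherwise Player I wins. *)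

theory Defs
  imports "HOL-Analysis.Analysis"
begin

definition pruned_tree :: "'a set \<Rightarrow> 'a list set \<Rightarrow> bool" where
  "pruned_tree A T \<longleftrightarrow> T \<subseteq> lists A
     \<and> (\<forall>s\<in>T. \<forall>n. take n s \<in> T)
     \<and> (\<forall>s\<in>T. \<exists>t\<in>T. length t > length s \<and> take (length s) t = s)"

definition branches :: "'a list set \<Rightarrow> (nat \<Rightarrow> 'a) set" where
  "branches T = {x. \<forall>n. map x [0..<n] \<in> T}"

definition cyl :: "'a list set \<Rightarrow> 'a list \<Rightarrow> (nat \<Rightarrow> 'a) set" where
  "cyl T s = {x \<in> branches T. map x [0..<length s] = s}"

text \<open>Closed subsets of X for the topology generated by the cylinder sets
  (the cylinders form a base, so C is closed iff every point of X outside C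
  has a cylinder neighbourhood disjoint from C).\<close>
definition closed_branches :: "'a list set \<Rightarrow> (nat \<Rightarrow> 'a) set \<Rightarrow> bool" where
  "closed_branches T C \<longleftrightarrow> C \<subseteq> branches T \<and>
     (\<forall>x \<in> branches T - C. \<exists>s\<in>T. x \<in> cyl T s \<and> cyl T s \<inter> C = {})"

text \<open>Oscillation, valued in the extended reals (the sup may be infinite).\<close>
definition osc :: "'a list set \<Rightarrow> ((nat \<Rightarrow> 'a) \<Rightarrow> real) \<Rightarrow> (nat \<Rightarrow> 'a) set \<Rightarrow> (nat \<Rightarrow> 'a) \<Rightarrow> ereal" where
  "osc T f C x = (INF s \<in> {s \<in> T. x \<in> cyl T s}.
      Sup {ereal \<bar>f y - f z\<bar> | y z. y \<in> cyl T s \<inter> C \<and> z \<in> cyl T s \<inter> C})"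

text \<open>Game Gamma'(f). A strategy for Player I maps the list of Player II's
  previous moves to Player I's next move. The play produced by strategy sigma
  against II's move sequence vw: I's move at time t.\<close>
definition playI :: "((real \<times> real) list \<Rightarrow> 'a) \<Rightarrow> (nat \<Rightarrow> real \<times> real) \<Rightarrow> nat \<Rightarrow> 'a" where
  "playI \<sigma> vw t = \<sigma> (map vw [0..<t])"

definition II_wins :: "((nat \<Rightarrow> 'a) \<Rightarrow> real) \<Rightarrow> (nat \<Rightarrow> 'a) \<Rightarrow> (nat \<Rightarrow> real \<times> real) \<Rightarrow> bool" where
  "II_wins f x vw \<longleftrightarrow>
     limsup (\<lambda>t. ereal (fst (vw t))) = ereal (f x) \<and>
     liminf (\<lambda>t. ereal (snd (vw t))) = ereal (f x)"

definition I_winning_strategy :: "'a list set \<Rightarrow> ((nat \<Rightarrow> 'a) \<Rightarrow> real) \<Rightarrow> ((real \<times> real) list \<Rightarrow> 'a) \<Rightarrow> bool" where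
  "I_winning_strategy T f \<sigma> \<longleftrightarrow>
     (\<forall>vw. (\<forall>t. map (playI \<sigma> vw) [0..<Suc t] \<in> T) \<and> \<not> II_wins f (playI \<sigma> vw) vw)"

end

theory Submission
  imports Defs
begin

text \<open>Player I follows a target branch u in C, playing its coordinates. Since the
  oscillation is at least e > 0 at every point of C, each cylinder around u
  contains a branch u' of C with |f u' - f u| > e/2 = d. Player I keeps u until
  Player II has played, since the last switch, some v above f u - d/4 and some
  w below f u + d/4; then I switches to such a u' agreeing with u on all moves
  played so far. If I switches only finitely often, the play is the final target
  u, and one of limsup v \<le> f u - d/4, liminf w \<ge> f u + d/4 holds. If I switches
  infinitely often and II won with value a, then eventually v < a + d/8 and
  w > a - d/8, so every later target lies within 3d/8 of a, contradicting that
  consecutive targets are more than d apart.\<close>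

lemma ex_least_nat_ge:
  fixes s t :: nat
  assumes "P t" and "s \<le> t"
  shows "\<exists>t'\<ge>s. P t' \<and> (\<forall>j. s \<le> j \<longrightarrow> j < t' \<longrightarrow> \<not> P j)"
proof -
  let ?Q = "\<lambda>t'. s \<le> t' \<and> P t'"
  have "?Q t" using assms by blast
  then show ?thesis
    using LeastI[of ?Q] not_less_Least[of _ ?Q] by blast
qed

lemma II_wins_eventually_near:
  assumes "II_wins f x vw" and "0 < e"
  shows "eventually (\<lambda>t. fst (vw t) < f x + e \<and> f x - e < snd (vw t)) sequentially"
proof -
  have "eventually (\<lambda>t. ereal (fst (vw t)) < ereal (f x + e)) sequentially"
    by (rule Limsup_lessD) (use assms in \<open>simp add: II_wins_def\<close>)
  moreover have "eventually (\<lambda>t. ereal (f x - e) < ereal (snd (vw t))) sequentially"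
    by (rule less_LiminfD) (use assms in \<open>simp add: II_wins_def\<close>)
  ultimately show ?thesis by (auto elim: eventually_mono[OF eventually_conj])
qed

lemma II_wins_frequently_near:
  assumes "II_wins f x vw" and "0 < e"
  shows "\<exists>\<^sub>F t in sequentially. f x - e < fst (vw t)"
    and "\<exists>\<^sub>F t in sequentially. snd (vw t) < f x + e"
proof -
  have "\<not> limsup (\<lambda>t. ereal (fst (vw t))) \<le> ereal (f x - e)"
    using assms by (simp add: II_wins_def)
  then show "\<exists>\<^sub>F t in sequentially. f x - e < fst (vw t)"
    unfolding frequently_def
  proof (rule contrapos_nn)
    assume "eventually (\<lambda>t. \<not> f x - e < fst (vw t)) sequentially"
    then show "limsup (\<lambda>t. ereal (fst (vw t))) \<le> ereal (f x - e)"
      by (intro Limsup_bounded) (simp add: eventually_mono)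
  qed
  have "\<not> ereal (f x + e) \<le> liminf (\<lambda>t. ereal (snd (vw t)))"
    using assms by (simp add: II_wins_def)
  then show "\<exists>\<^sub>F t in sequentially. snd (vw t) < f x + e"
    unfolding frequently_def
  proof (rule contrapos_nn)
    assume "eventually (\<lambda>t. \<not> snd (vw t) < f x + e) sequentially"
    then show "ereal (f x + e) \<le> liminf (\<lambda>t. ereal (snd (vw t)))"
      by (intro Liminf_bounded) (simp add: eventually_mono)
  qed
qed

lemma far_branch_in_cylinder:
  assumes "C \<subseteq> branches T" and "u \<in> C" and "ereal e < osc T f C u"
  shows "\<exists>u'. u' \<in> C \<and> (\<forall>i<n. u' i = u i) \<and> e/2 < \<bar>f u' - f u\<bar>"
proof -
  define s where "s = map u [0..<n]"
  have "s \<in> T" "u \<in> cyl T s"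
    using assms(1,2) unfolding branches_def cyl_def s_def by auto
  then have "osc T f C u \<le> Sup {ereal \<bar>f y - f z\<bar> | y z. y \<in> cyl T s \<inter> C \<and> z \<in> cyl T s \<inter> C}"
    unfolding osc_def by (intro INF_lower) auto
  with assms(3) have "ereal e < Sup {ereal \<bar>f y - f z\<bar> | y z. y \<in> cyl T s \<inter> C \<and> z \<in> cyl T s \<inter> C}"
    by (rule order_less_le_trans)
  then obtain y z where yz: "y \<in> cyl T s \<inter> C" "z \<in> cyl T s \<inter> C" "e < \<bar>f y - f z\<bar>"
    by (auto simp: less_Sup_iff)
  then have "\<forall>i<n. y i = u i" "\<forall>i<n. z i = u i"
    by (auto simp: cyl_def s_def map_eq_conv)
  moreover have "e/2 < \<bar>f y - f u\<bar> \<or> e/2 < \<bar>f z - f u\<bar>" using yz(3) by arith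
  ultimately show ?thesis using yz by blast
qed

lemma far_branch_choice:
  assumes "C \<subseteq> branches T" and "ereal e < (INF x \<in> C. osc T f C x)"
  obtains jump where "\<And>u n. u \<in> C \<Longrightarrow> jump u n \<in> C"
    and "\<And>u n i. u \<in> C \<Longrightarrow> i < n \<Longrightarrow> jump u n i = u i"
    and "\<And>u n. u \<in> C \<Longrightarrow> e/2 < \<bar>f (jump u n) - f u\<bar>"
proof -
  define jump where
    "jump u n = (SOME u'. u' \<in> C \<and> (\<forall>i<n. u' i = u i) \<and> e/2 < \<bar>f u' - f u\<bar>)" for u n
  have "jump u n \<in> C \<and> (\<forall>i<n. jump u n i = u i) \<and> e/2 < \<bar>f (jump u n) - f u\<bar>"
    if "u \<in> C" for u n
  proof -
    have "ereal e < osc T f C u"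
      using assms(2) INF_lower[OF that, of "osc T f C"] by (rule order_less_le_trans)
    then show ?thesis
      unfolding jump_def by (rule someI_ex[OF far_branch_in_cylinder[OF assms(1) that]])
  qed
  then show thesis using that by blast
qed

fun switching_state ::
  "((nat \<Rightarrow> 'a) \<Rightarrow> nat \<Rightarrow> nat \<Rightarrow> 'a) \<Rightarrow> ((nat \<Rightarrow> 'a) \<Rightarrow> real) \<Rightarrow> real \<Rightarrow> (nat \<Rightarrow> 'a)
    \<Rightarrow> (nat \<Rightarrow> real \<times> real) \<Rightarrow> nat \<Rightarrow> (nat \<Rightarrow> 'a) \<times> bool \<times> bool" where
  "switching_state jump f d u0 vw 0 = (u0, False, False)"
| "switching_state jump f d u0 vw (Suc t) =
     (let (u, hi, lo) = switching_state jump f d u0 vw t;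
          (v, w) = vw t;
          hi' = (hi \<or> f u - d/4 < v);
          lo' = (lo \<or> w < f u + d/4)
      in if hi' \<and> lo' then (jump u (Suc t), False, False) else (u, hi', lo'))"

definition switching_strategy ::
  "((nat \<Rightarrow> 'a) \<Rightarrow> nat \<Rightarrow> nat \<Rightarrow> 'a) \<Rightarrow> ((nat \<Rightarrow> 'a) \<Rightarrow> real) \<Rightarrow> real \<Rightarrow> (nat \<Rightarrow> 'a)
    \<Rightarrow> (real \<times> real) list \<Rightarrow> 'a" where
  "switching_strategy jump f d u0 l =
     fst (switching_state jump f d u0 (\<lambda>i. l ! i) (length l)) (length l)"

lemma switching_state_cong:
  "(\<And>i. i < t \<Longrightarrow> vw i = vw' i) \<Longrightarrow> switching_state jump f d u0 vw t = switching_state jump f d u0 vw' t"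
  by (induction t) (auto simp: Let_def)

context
  fixes jump :: "(nat \<Rightarrow> 'a) \<Rightarrow> nat \<Rightarrow> nat \<Rightarrow> 'a" and f :: "(nat \<Rightarrow> 'a) \<Rightarrow> real"
    and d :: real and u0 :: "nat \<Rightarrow> 'a"
begin

abbreviation target :: "(nat \<Rightarrow> real \<times> real) \<Rightarrow> nat \<Rightarrow> nat \<Rightarrow> 'a" where
  "target vw t \<equiv> fst (switching_state jump f d u0 vw t)"

abbreviation seen_high :: "(nat \<Rightarrow> real \<times> real) \<Rightarrow> nat \<Rightarrow> bool" where
  "seen_high vw t \<equiv> fst (snd (switching_state jump f d u0 vw t))"

abbreviation seen_low :: "(nat \<Rightarrow> real \<times> real) \<Rightarrow> nat \<Rightarrow> bool" where
  "seen_low vw t \<equiv> snd (snd (switching_state jump f d u0 vw t))"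

abbreviation switches_at :: "(nat \<Rightarrow> real \<times> real) \<Rightarrow> nat \<Rightarrow> bool" where
  "switches_at vw t \<equiv> (seen_high vw t \<or> f (target vw t) - d/4 < fst (vw t))
                   \<and> (seen_low vw t \<or> snd (vw t) < f (target vw t) + d/4)"

lemma switching_state_switch:
  "switches_at vw t \<Longrightarrow>
     switching_state jump f d u0 vw (Suc t) = (jump (target vw t) (Suc t), False, False)"
  by (simp add: Let_def split_beta)

lemma switching_state_no_switch:
  "\<not> switches_at vw t \<Longrightarrow> switching_state jump f d u0 vw (Suc t) =
     (target vw t, seen_high vw t \<or> f (target vw t) - d/4 < fst (vw t),
      seen_low vw t \<or> snd (vw t) < f (target vw t) + d/4)"
  by (simp add: Let_def split_beta)

declare switching_state.simps(2) [simp del]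

lemma switching_phase:
  assumes "s \<le> t" and "\<And>j. s \<le> j \<Longrightarrow> j < t \<Longrightarrow> \<not> switches_at vw j"
  shows "target vw t = target vw s
    \<and> (seen_high vw t \<longleftrightarrow> seen_high vw s \<or> (\<exists>i. s \<le> i \<and> i < t \<and> f (target vw s) - d/4 < fst (vw i)))
    \<and> (seen_low vw t \<longleftrightarrow> seen_low vw s \<or> (\<exists>i. s \<le> i \<and> i < t \<and> snd (vw i) < f (target vw s) + d/4))"
  using assms
proof (induction t rule: dec_induct)
  case base
  show ?case by auto
next
  case (step m)
  have "\<not> switches_at vw m" using step.prems[of m] step.hyps by simp
  then have "switching_state jump f d u0 vw (Suc m) =
     (target vw m, seen_high vw m \<or> f (target vw m) - d/4 < fst (vw m),
      seen_low vw m \<or> snd (vw m) < f (target vw m) + d/4)"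
    by (rule switching_state_no_switch)
  moreover have "target vw m = target vw s
    \<and> (seen_high vw m \<longleftrightarrow> seen_high vw s \<or> (\<exists>i. s \<le> i \<and> i < m \<and> f (target vw s) - d/4 < fst (vw i)))
    \<and> (seen_low vw m \<longleftrightarrow> seen_low vw s \<or> (\<exists>i. s \<le> i \<and> i < m \<and> snd (vw i) < f (target vw s) + d/4))"
    using step by simp
  ultimately show ?case using step.hyps by (auto simp: less_Suc_eq)
qed

lemma switches_at_phase_end:
  assumes "s \<le> m" and "\<And>j. s \<le> j \<Longrightarrow> j < m \<Longrightarrow> \<not> switches_at vw j"
    and "s \<le> t1" "t1 \<le> m" "f (target vw s) - d/4 < fst (vw t1)"
    and "s \<le> t2" "t2 \<le> m" "snd (vw t2) < f (target vw s) + d/4"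
  shows "switches_at vw m"
proof -
  note phase = switching_phase[OF assms(1,2)]
  have "seen_high vw m \<or> f (target vw m) - d/4 < fst (vw m)"
  proof (cases "t1 < m")
    case True
    then show ?thesis using phase assms(3,5) by blast
  next
    case False
    then show ?thesis using phase assms(4,5) by simp
  qed
  moreover have "seen_low vw m \<or> snd (vw m) < f (target vw m) + d/4"
  proof (cases "t2 < m")
    case True
    then show ?thesis using phase assms(6,8) by blast
  next
    case False
    then show ?thesis using phase assms(7,8) by simp
  qed
  ultimately show ?thesis ..
qed

lemma playI_switching_strategy:
  "playI (switching_strategy jump f d u0) vw t = target vw t t"
proof -
  have "switching_state jump f d u0 (\<lambda>i. map vw [0..<t] ! i) t = switching_state jump f d u0 vw t"
    by (rule switching_state_cong) simp
  then show ?thesis by (simp add: playI_def switching_strategy_def)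
qed

lemma between_switches:
  assumes "switches_at vw t1" and "Suc t1 \<le> t2" and "switches_at vw t2"
    and "\<And>j. Suc t1 \<le> j \<Longrightarrow> j < t2 \<Longrightarrow> \<not> switches_at vw j"
  shows "target vw t2 = target vw (Suc t1)"
    and "\<exists>i. Suc t1 \<le> i \<and> i \<le> t2 \<and> f (target vw t2) - d/4 < fst (vw i)"
    and "\<exists>i. Suc t1 \<le> i \<and> i \<le> t2 \<and> snd (vw i) < f (target vw t2) + d/4"
proof -
  have fresh: "\<not> seen_high vw (Suc t1)" "\<not> seen_low vw (Suc t1)"
    using switching_state_switch[OF assms(1)] by simp_all
  note phase = switching_phase[OF assms(2,4)]
  show target: "target vw t2 = target vw (Suc t1)" using phase by blast
  show "\<exists>i. Suc t1 \<le> i \<and> i \<le> t2 \<and> f (target vw t2) - d/4 < fst (vw i)"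
  proof (cases "seen_high vw t2")
    case True
    then obtain i where "Suc t1 \<le> i" "i < t2" "f (target vw t2) - d/4 < fst (vw i)"
      using phase fresh(1) unfolding target by blast
    then show ?thesis by (blast intro: less_imp_le)
  next
    case False
    then show ?thesis using assms(2,3) by blast
  qed
  show "\<exists>i. Suc t1 \<le> i \<and> i \<le> t2 \<and> snd (vw i) < f (target vw t2) + d/4"
  proof (cases "seen_low vw t2")
    case True
    then obtain i where "Suc t1 \<le> i" "i < t2" "snd (vw i) < f (target vw t2) + d/4"
      using phase fresh(2) unfolding target by blast
    then show ?thesis by (blast intro: less_imp_le)
  next
    case False
    then show ?thesis using assms(2,3) by blast
  qed
qed

context
  fixes C :: "(nat \<Rightarrow> 'a) set"
  assumes d_pos: "0 < d" and u0_in: "u0 \<in> C"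
    and jump_in: "\<And>u n. u \<in> C \<Longrightarrow> jump u n \<in> C"
    and jump_prefix: "\<And>u n i. u \<in> C \<Longrightarrow> i < n \<Longrightarrow> jump u n i = u i"
    and jump_far: "\<And>u n. u \<in> C \<Longrightarrow> d < \<bar>f (jump u n) - f u\<bar>"
begin

lemma target_in: "target vw t \<in> C"
proof (induction t)
  case 0
  show ?case by (simp add: u0_in)
next
  case (Suc t)
  then show ?case
    by (cases "switches_at vw t") (simp_all add: switching_state_switch switching_state_no_switch jump_in)
qed

lemma target_Suc_agrees:
  assumes "i \<le> t"
  shows "target vw (Suc t) i = target vw t i"
proof (cases "switches_at vw t")
  case True
  then have "target vw (Suc t) = jump (target vw t) (Suc t)"
    by (simp only: switching_state_switch[OF True] fst_conv)
  with assms show ?thesis by (simp add: jump_prefix target_in)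
next
  case False
  then show ?thesis by (simp only: switching_state_no_switch[OF False] fst_conv)
qed

lemma target_stable:
  assumes "i \<le> t" and "t \<le> t'"
  shows "target vw t' i = target vw t i"
  using assms(2) by (induction t' rule: dec_induct) (use assms(1) in \<open>simp_all add: target_Suc_agrees\<close>)

lemma playI_agrees_target: "i \<le> t \<Longrightarrow> playI (switching_strategy jump f d u0) vw i = target vw t i"
  using target_stable[of i i t] by (simp add: playI_switching_strategy)

lemma II_loses_if_switching_stops:
  assumes "eventually (\<lambda>t. \<not> switches_at vw t) sequentially"
  shows "\<not> II_wins f (playI (switching_strategy jump f d u0) vw) vw"
proof
  assume win: "II_wins f (playI (switching_strategy jump f d u0) vw) vw"
  obtain N where N: "\<And>t. N \<le> t \<Longrightarrow> \<not> switches_at vw t"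
    using assms by (auto simp: eventually_sequentially)
  then have target_N: "target vw t = target vw N" if "N \<le> t" for t
    using switching_phase[OF that] by blast
  have "playI (switching_strategy jump f d u0) vw = target vw N"
  proof
    fix i
    show "playI (switching_strategy jump f d u0) vw i = target vw N i"
      using playI_agrees_target[of i "max i N"] target_N[of "max i N"] by simp
  qed
  with win have "\<exists>\<^sub>F t in sequentially. f (target vw N) - d/4 < fst (vw t)"
    and "\<exists>\<^sub>F t in sequentially. snd (vw t) < f (target vw N) + d/4"
    using II_wins_frequently_near[of f _ vw "d/4"] d_pos by simp_all
  then obtain t1 t2 where "N \<le> t1" "f (target vw N) - d/4 < fst (vw t1)"
    and "N \<le> t2" "snd (vw t2) < f (target vw N) + d/4"
    unfolding frequently_sequentially by blast
  then have "switches_at vw (max t1 t2)"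
    by (intro switches_at_phase_end[of N]) (simp_all add: N)
  moreover have "N \<le> max t1 t2" using \<open>N \<le> t1\<close> by simp
  ultimately show False using N by blast
qed

lemma II_loses_if_switching_recurs:
  assumes recur: "\<exists>\<^sub>F t in sequentially. switches_at vw t"
  shows "\<not> II_wins f (playI (switching_strategy jump f d u0) vw) vw"
proof
  assume win: "II_wins f (playI (switching_strategy jump f d u0) vw) vw"
  define a where "a = f (playI (switching_strategy jump f d u0) vw)"
  obtain N where N: "\<And>t. N \<le> t \<Longrightarrow> fst (vw t) < a + d/8 \<and> a - d/8 < snd (vw t)"
    using II_wins_eventually_near[OF win, of "d/8"] d_pos
    unfolding a_def eventually_sequentially by auto
  have next_switch: "\<exists>t'\<ge>s. switches_at vw t' \<and> (\<forall>j. s \<le> j \<longrightarrow> j < t' \<longrightarrow> \<not> switches_at vw j)" for s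
  proof -
    obtain t where "switches_at vw t" "s \<le> t" using recur unfolding frequently_sequentially by blast
    then show ?thesis by (rule ex_least_nat_ge[where P = "switches_at vw"])
  qed
  have near: "\<bar>f (target vw t2) - a\<bar> < 3*d/8"
    if "N \<le> t1" "switches_at vw t1" "Suc t1 \<le> t2" "switches_at vw t2"
      "\<forall>j. Suc t1 \<le> j \<longrightarrow> j < t2 \<longrightarrow> \<not> switches_at vw j" for t1 t2
  proof -
    note between = between_switches[OF that(2,3,4) that(5)[rule_format]]
    obtain i where i: "Suc t1 \<le> i" "f (target vw t2) - d/4 < fst (vw i)"
      using between(2) by blast
    obtain j where j: "Suc t1 \<le> j" "snd (vw j) < f (target vw t2) + d/4"
      using between(3) by blast
    have "fst (vw i) < a + d/8" "a - d/8 < snd (vw j)"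
      using N[of i] N[of j] i(1) j(1) that(1) by simp_all
    with i(2) j(2) show ?thesis unfolding abs_less_iff by linarith
  qed
  obtain t1 where t1: "N \<le> t1" "switches_at vw t1"
    using recur unfolding frequently_sequentially by blast
  obtain t2 where t2: "Suc t1 \<le> t2" "switches_at vw t2"
    "\<forall>j. Suc t1 \<le> j \<longrightarrow> j < t2 \<longrightarrow> \<not> switches_at vw j"
    using next_switch by blast
  obtain t3 where t3: "Suc t2 \<le> t3" "switches_at vw t3"
    "\<forall>j. Suc t2 \<le> j \<longrightarrow> j < t3 \<longrightarrow> \<not> switches_at vw j"
    using next_switch by blast
  have "target vw t3 = target vw (Suc t2)"
    using between_switches(1)[OF t2(2) t3(1,2) t3(3)[rule_format]] .
  also have "\<dots> = jump (target vw t2) (Suc t2)"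
    by (simp only: switching_state_switch[OF t2(2)] fst_conv)
  finally have "d < \<bar>f (target vw t3) - f (target vw t2)\<bar>"
    using jump_far[OF target_in] by simp
  moreover have "\<bar>f (target vw t2) - a\<bar> < 3*d/8"
    using near[OF t1 t2(1,2,3)] .
  moreover have "\<bar>f (target vw t3) - a\<bar> < 3*d/8"
    using near[OF _ t2(2) t3(1,2,3)] t1(1) t2(1) by simp
  ultimately show False using d_pos by linarith
qed

lemma switching_strategy_winning:
  assumes "C \<subseteq> branches T"
  shows "I_winning_strategy T f (switching_strategy jump f d u0)"
  unfolding I_winning_strategy_def
proof (intro allI conjI)
  fix vw t
  have agree: "map (playI (switching_strategy jump f d u0) vw) [0..<Suc t] = map (target vw t) [0..<Suc t]"
    by (simp add: playI_agrees_target)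
  have "target vw t \<in> branches T" using assms target_in by blast
  then have "map (target vw t) [0..<Suc t] \<in> T" unfolding branches_def by blast
  then show "map (playI (switching_strategy jump f d u0) vw) [0..<Suc t] \<in> T" unfolding agree .
next
  fix vw
  show "\<not> II_wins f (playI (switching_strategy jump f d u0) vw) vw"
  proof (cases "\<exists>\<^sub>F t in sequentially. switches_at vw t")
    case True
    then show ?thesis by (rule II_loses_if_switching_recurs)
  next
    case False
    then show ?thesis by (intro II_loses_if_switching_stops) (simp add: not_frequently)
  qed
qed

end

end

theorem mainTheorem17:
  fixes A :: "'a set" and T :: "'a list set" and f :: "(nat \<Rightarrow> 'a) \<Rightarrow> real"
    and C :: "(nat \<Rightarrow> 'a) set"
  assumes "A \<noteq> {}" and "countable A" and "pruned_tree A T"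
    and "closed_branches T C" and "C \<noteq> {}"
    and "(INF x \<in> C. osc T f C x) > 0"
  shows "\<exists>\<sigma>. I_winning_strategy T f \<sigma>"
proof -
  have C_branches: "C \<subseteq> branches T" using assms(4) by (simp add: closed_branches_def)
  obtain e where "0 < ereal e" and e_below: "ereal e < (INF x \<in> C. osc T f C x)"
    using ereal_dense2[OF assms(6)] by blast
  then have e_pos: "0 < e" by simp
  obtain jump where "\<And>u n. u \<in> C \<Longrightarrow> jump u n \<in> C"
    and "\<And>u n i. u \<in> C \<Longrightarrow> i < n \<Longrightarrow> jump u n i = u i"
    and "\<And>u n. u \<in> C \<Longrightarrow> e/2 < \<bar>f (jump u n) - f u\<bar>"
    using far_branch_choice[OF C_branches e_below] by blast
  moreover obtain u0 where "u0 \<in> C" using assms(5) by blast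
  ultimately have "I_winning_strategy T f (switching_strategy jump f (e/2) u0)"
    using e_pos C_branches by (intro switching_strategy_winning[of "e/2" u0 C]) simp_all
  then show ?thesis by blast
qed

end
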